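(* Let $L$ be an infinite set and let $Q$ be either the edgeless cube $Q_L$ or the edged cube $\bar Q_L$. Let $\vec\sigma,\vec\tau$ be universally convergent basic sequences. Then $\vec\sigma\sim\vec\tau$ if and only if $\vec\sigma\,\mathrm{id}=\vec\tau\,\mathrm{id}$, where $\mathrm{id}$ is the identity labelling. Moreover, if either holds, then $\vec\sigma f=\vec\tau f$ for every labelling $f$.
   Context: Let $L$ be an infinite set, $-L=\{-r:r\in L\}$ a disjoint copy of $L$, and $0$ a new element; $L^\dagger=-L\cup\{0\}\cup L$ with $-(-r)=r$, $-0=0$. Adjoin $\pm\infty$ with $-(+\infty)=-\infty$ and set $\bar L^\dagger=L^\dagger\cup\{\pm\infty\}$. Points of $U=(\bar L^\dagger)^3$ have coordinates $x,y,z$. The edgeless cube $Q_L$ is the set of points of $U$ with exactly one coordinate in $\{\pm\infty\}$ (cells). The edged cube $\bar Q_L$ is the set of cells $(p,i)$ with $p\in U$, $i\in\{x,y,z\}$, $p_i\in\{\pm\infty\}$ ($i$ marks the face). For $i\in\{x,y,z\}$, $\alpha\in\bar L^\dagger$, the quarter-turn twist $T_{i,\alpha}$ is the permutation of cells fixing every cell whose point $p$ has $p_i\ne\alpha$ and acting on the others by $T_{x,\alpha}(\alpha,y,z)=(\alpha,-z,y)$, $T_{y,\alpha}(x,\alpha,z)=(z,\alpha,-x)$, $T_{z,\alpha}(x,y,\alpha)=(-y,x,\alpha)$ (in $\bar Q_L$ the marked coordinate is carried along by the rotation). Basic twists are $T,T^2,T^3$ for quarter-turn twists $T$. A basic sequence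 is a sequence $\langle\sigma_\eta:\eta<\theta\rangle$ of basic twists of ordinal length $\theta$. A labelling is a map $f$ from cells to $X\cup\{\mathrm{NaC}\}$ for a set $X\not\ni\mathrm{NaC}$; it is legal if it never takes value NaC; a configuration is a labelling with $X$ the six colors red, white, green, orange, yellow, blue. A twist $\sigma$ acts by $(\sigma f)(c)=f(\sigma^{-1}c)$. Applying $\vec\sigma=\langle\sigma_\eta:\eta<\theta\rangle$ to $f_0$ produces $f_{\eta+1}=\sigma_\eta f_\eta$, and for limit $\lambda\le\theta$, $f_\lambda(c)$ is the eventually constant value of $f_\eta(c)$ ($\eta<\lambda$) if it exists and NaC otherwise; the terminal labelling $f_\theta$ is denoted $\vec\sigma f_0$. The identity labelling $\mathrm{id}$ labels each cell by itself; $\vec\sigma$ is universally convergent if $\vec\sigma\,\mathrm{id}$ is legal. $\vec\sigma\sim\vec\tau$ means $\vec\sigma f=\vec\tau f$ for every configuration $f$. *)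

theory Defs
  imports Main
begin

text \<open>The set L is represented by a type 'l (assumed infinite in the theorem).
  L-dagger = -L u {0} u L is the datatype lab; the extension by +-infinity is ext.\<close>

datatype 'l lab = Neg 'l | Zero | Pos 'l

datatype 'l ext = Fin "'l lab" | PInf | MInf

fun lneg :: "'l lab \<Rightarrow> 'l lab" where
  "lneg (Neg r) = Pos r"
| "lneg Zero = Zero"
| "lneg (Pos r) = Neg r"

fun eneg :: "'l ext \<Rightarrow> 'l ext" where
  "eneg (Fin a) = Fin (lneg a)"
| "eneg PInf = MInf"
| "eneg MInf = PInf"

definition is_inf :: "'l ext \<Rightarrow> bool" where
  "is_inf e \<longleftrightarrow> e = PInf \<or> e = MInf"

type_synonym 'l point = "'l ext \<times> 'l ext \<times> 'l ext"

datatype axis = AX | AY | AZ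

fun coord :: "'l point \<Rightarrow> axis \<Rightarrow> 'l ext" where
  "coord (x, y, z) AX = x"
| "coord (x, y, z) AY = y"
| "coord (x, y, z) AZ = z"

definition edgeless_cube :: "'l point set" where
  "edgeless_cube = {(x, y, z).
      (is_inf x \<and> \<not> is_inf y \<and> \<not> is_inf z) \<or>
      (\<not> is_inf x \<and> is_inf y \<and> \<not> is_inf z) \<or>
      (\<not> is_inf x \<and> \<not> is_inf y \<and> is_inf z)}"

text \<open>Edged cube: pairs (p, i) with p_i in {+-infinity}; i marks the face.\<close>
definition edged_cube :: "('l point \<times> axis) set" where
  "edged_cube = {(p, i). is_inf (coord p i)}"

fun qt_point :: "axis \<Rightarrow> 'l ext \<Rightarrow> 'l point \<Rightarrow> 'l point" where
  "qt_point AX \<alpha> (x, y, z) = (if x = \<alpha> then (x, eneg z, y) else (x, y, z))"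
| "qt_point AY \<alpha> (x, y, z) = (if y = \<alpha> then (z, y, eneg x) else (x, y, z))"
| "qt_point AZ \<alpha> (x, y, z) = (if z = \<alpha> then (eneg y, x, z) else (x, y, z))"

text \<open>How the rotation about axis i carries the marked coordinate j.\<close>
fun qt_axis :: "axis \<Rightarrow> axis \<Rightarrow> axis" where
  "qt_axis AX AX = AX" | "qt_axis AX AY = AZ" | "qt_axis AX AZ = AY"
| "qt_axis AY AY = AY" | "qt_axis AY AX = AZ" | "qt_axis AY AZ = AX"
| "qt_axis AZ AZ = AZ" | "qt_axis AZ AX = AY" | "qt_axis AZ AY = AX"

definition qt_edged :: "axis \<Rightarrow> 'l ext \<Rightarrow> 'l point \<times> axis \<Rightarrow> 'l point \<times> axis" where
  "qt_edged i \<alpha> c = (if coord (fst c) i = \<alpha>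
      then (qt_point i \<alpha> (fst c), qt_axis i (snd c)) else c)"

definition edgeless_basic :: "('l point \<Rightarrow> 'l point) set" where
  "edgeless_basic = {qt_point i \<alpha> ^^ k | i \<alpha> k. k \<in> {1, 2, 3}}"

definition edged_basic :: "('l point \<times> axis \<Rightarrow> 'l point \<times> axis) set" where
  "edged_basic = {qt_edged i \<alpha> ^^ k | i \<alpha> k. k \<in> {1, 2, 3}}"

text \<open>A labelling with values in X is a map cells => 'x option, None standing for NaC.
  A sequence of ordinal length theta is given by a well-order r (its order type is theta)
  and a map sigma from Field r to twists.\<close>

datatype color = Red | White | Green | Orange | Yellow | Blue

definition twist_act :: "('c \<Rightarrow> 'c) \<Rightarrow> ('c \<Rightarrow> 'x option) \<Rightarrow> ('c \<Rightarrow> 'x option)" where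
  "twist_act s f = (\<lambda>c. f (inv s c))"

definition lim_val :: "'a rel \<Rightarrow> 'a set \<Rightarrow> ('a \<Rightarrow> 'x option) \<Rightarrow> 'x option" where
  "lim_val r P h = (if \<exists>v. \<exists>\<xi>0\<in>P. \<forall>\<xi>\<in>P. (\<xi>0, \<xi>) \<in> r \<longrightarrow> h \<xi> = v
     then (THE v. \<exists>\<xi>0\<in>P. \<forall>\<xi>\<in>P. (\<xi>0, \<xi>) \<in> r \<longrightarrow> h \<xi> = v) else None)"

text \<open>The labelling obtained after having applied the twists indexed by the initial
  segment P, given the labellings g at the elements of P.\<close>
definition next_lab :: "'a rel \<Rightarrow> ('a \<Rightarrow> 'c \<Rightarrow> 'c) \<Rightarrow> ('c \<Rightarrow> 'x option) \<Rightarrow> 'a set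
    \<Rightarrow> ('a \<Rightarrow> 'c \<Rightarrow> 'x option) \<Rightarrow> ('c \<Rightarrow> 'x option)" where
  "next_lab r \<sigma> f0 P g =
     (if P = {} then f0
      else if (\<exists>\<xi>\<in>P. \<forall>\<zeta>\<in>P. (\<zeta>, \<xi>) \<in> r)
      then (let \<xi> = (THE \<xi>. \<xi> \<in> P \<and> (\<forall>\<zeta>\<in>P. (\<zeta>, \<xi>) \<in> r)) in twist_act (\<sigma> \<xi>) (g \<xi>))
      else (\<lambda>c. lim_val r P (\<lambda>\<xi>. g \<xi> c)))"

text \<open>stage r sigma f0 eta = f_eta (the labelling before applying sigma_eta).\<close>
definition stage :: "'a rel \<Rightarrow> ('a \<Rightarrow> 'c \<Rightarrow> 'c) \<Rightarrow> ('c \<Rightarrow> 'x option) \<Rightarrow> 'a \<Rightarrow> ('c \<Rightarrow> 'x option)" where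
  "stage r \<sigma> f0 = wfrec (r - Id) (\<lambda>g \<eta>. next_lab r \<sigma> f0 {\<xi>. (\<xi>, \<eta>) \<in> r - Id} g)"

text \<open>The terminal labelling f_theta, written sigma f0 in the paper.\<close>
definition run :: "'a rel \<Rightarrow> ('a \<Rightarrow> 'c \<Rightarrow> 'c) \<Rightarrow> ('c \<Rightarrow> 'x option) \<Rightarrow> ('c \<Rightarrow> 'x option)" where
  "run r \<sigma> f0 = next_lab r \<sigma> f0 (Field r) (stage r \<sigma> f0)"

definition id_lab :: "'c \<Rightarrow> 'c option" where
  "id_lab c = Some c"

definition basic_seq :: "('c \<Rightarrow> 'c) set \<Rightarrow> 'a rel \<Rightarrow> ('a \<Rightarrow> 'c \<Rightarrow> 'c) \<Rightarrow> bool" where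
  "basic_seq B r \<sigma> \<longleftrightarrow> Well_order r \<and> (\<forall>\<eta>\<in>Field r. \<sigma> \<eta> \<in> B)"

definition legal :: "'c set \<Rightarrow> ('c \<Rightarrow> 'x option) \<Rightarrow> bool" where
  "legal Q f \<longleftrightarrow> (\<forall>c\<in>Q. f c \<noteq> None)"

definition univ_conv :: "'c set \<Rightarrow> 'a rel \<Rightarrow> ('a \<Rightarrow> 'c \<Rightarrow> 'c) \<Rightarrow> bool" where
  "univ_conv Q r \<sigma> \<longleftrightarrow> legal Q (run r \<sigma> id_lab)"

definition lab_eq :: "'c set \<Rightarrow> ('c \<Rightarrow> 'x option) \<Rightarrow> ('c \<Rightarrow> 'x option) \<Rightarrow> bool" where
  "lab_eq Q f g \<longleftrightarrow> (\<forall>c\<in>Q. f c = g c)"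

definition seq_equiv :: "'c set \<Rightarrow> 'a rel \<Rightarrow> ('a \<Rightarrow> 'c \<Rightarrow> 'c) \<Rightarrow> 'b rel \<Rightarrow> ('b \<Rightarrow> 'c \<Rightarrow> 'c) \<Rightarrow> bool" where
  "seq_equiv Q r \<sigma> s \<tau> \<longleftrightarrow> (\<forall>f :: 'c \<Rightarrow> color option. lab_eq Q (run r \<sigma> f) (run s \<tau> f))"

end

theory Submission
  imports Defs
begin

text \<open>The identity labelling is universal: by transfinite induction along the sequence, at
  every stage, wherever the run started from \<open>id\<close> shows a cell \<open>d\<close>, the run started from any
  labelling \<open>f\<close> shows \<open>f d\<close>. Twists only move labels around, and if the label \<open>d\<close> is eventually
  constant below a limit then so is \<open>f d\<close>. Hence, when \<open>\<sigma> id\<close> is legal, \<open>\<sigma> f = f \<circ> \<sigma> id\<close> on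
  the cells, so \<open>\<sigma> id\<close> determines every \<open>\<sigma> f\<close>; conversely two cells \<open>d \<noteq> d'\<close> are told apart
  by a two-coloured configuration.\<close>

definition relabelled :: "('c \<Rightarrow> 'x option) \<Rightarrow> ('c \<Rightarrow> 'c option) \<Rightarrow> ('c \<Rightarrow> 'x option) \<Rightarrow> bool"
  where "relabelled f F G \<longleftrightarrow> (\<forall>c d. F c = Some d \<longrightarrow> G c = f d)"

lemma relabelledD: "relabelled f F G \<Longrightarrow> F c = Some d \<Longrightarrow> G c = f d"
  unfolding relabelled_def by blast

lemma relabelled_id_lab: "relabelled f id_lab f"
  unfolding relabelled_def id_lab_def by simp

lemma relabelled_twist_act:
  "relabelled f F G \<Longrightarrow> relabelled f (twist_act s F) (twist_act s G)"
  unfolding relabelled_def twist_act_def by blast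

lemma eventual_value_unique:
  assumes "Well_order r" and "P \<subseteq> Field r"
    and "a \<in> P" "\<forall>\<xi>\<in>P. (a, \<xi>) \<in> r \<longrightarrow> h \<xi> = v"
    and "b \<in> P" "\<forall>\<xi>\<in>P. (b, \<xi>) \<in> r \<longrightarrow> h \<xi> = w"
  shows "v = w"
proof -
  have "\<forall>x\<in>Field r. \<forall>y\<in>Field r. (x, y) \<in> r \<or> (y, x) \<in> r"
    using wo_rel.TOTALS assms(1) unfolding wo_rel_def by blast
  then have "(a, b) \<in> r \<and> (b, b) \<in> r \<or> (b, a) \<in> r \<and> (a, a) \<in> r"
    using assms(2,3,5) by blast
  then show ?thesis
    using assms(3-6) by metis
qed

lemma lim_val_eqI:
  assumes "Well_order r" and "P \<subseteq> Field r"
    and "\<exists>\<xi>0\<in>P. \<forall>\<xi>\<in>P. (\<xi>0, \<xi>) \<in> r \<longrightarrow> h \<xi> = v"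
  shows "lim_val r P h = v"
proof -
  have "(THE v. \<exists>\<xi>0\<in>P. \<forall>\<xi>\<in>P. (\<xi>0, \<xi>) \<in> r \<longrightarrow> h \<xi> = v) = v"
  proof (rule the_equality)
    fix w assume "\<exists>\<xi>0\<in>P. \<forall>\<xi>\<in>P. (\<xi>0, \<xi>) \<in> r \<longrightarrow> h \<xi> = w"
    then show "w = v"
      using assms(3) eventual_value_unique[OF assms(1,2)] by metis
  qed (rule assms(3))
  then show ?thesis
    using assms(3) unfolding lim_val_def by auto
qed

lemma lim_val_SomeD:
  assumes "Well_order r" and "P \<subseteq> Field r" and "lim_val r P h = Some d"
  shows "\<exists>\<xi>0\<in>P. \<forall>\<xi>\<in>P. (\<xi>0, \<xi>) \<in> r \<longrightarrow> h \<xi> = Some d"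
proof -
  obtain v where v: "\<exists>\<xi>0\<in>P. \<forall>\<xi>\<in>P. (\<xi>0, \<xi>) \<in> r \<longrightarrow> h \<xi> = v"
    using assms(3) unfolding lim_val_def by (auto split: if_splits)
  moreover have "v = Some d"
    using lim_val_eqI[OF assms(1,2) v] assms(3) by simp
  ultimately show ?thesis
    by simp
qed

lemma next_lab_maximum:
  assumes "P \<noteq> {}" and "\<exists>\<xi>\<in>P. \<forall>\<zeta>\<in>P. (\<zeta>, \<xi>) \<in> r"
  shows "next_lab r \<sigma> f0 P g = twist_act (\<sigma> (THE \<xi>. \<xi> \<in> P \<and> (\<forall>\<zeta>\<in>P. (\<zeta>, \<xi>) \<in> r)))
    (g (THE \<xi>. \<xi> \<in> P \<and> (\<forall>\<zeta>\<in>P. (\<zeta>, \<xi>) \<in> r)))"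
  unfolding next_lab_def Let_def by (simp only: assms if_False if_True)

lemma next_lab_limit:
  assumes "P \<noteq> {}" and "\<not> (\<exists>\<xi>\<in>P. \<forall>\<zeta>\<in>P. (\<zeta>, \<xi>) \<in> r)"
  shows "next_lab r \<sigma> f0 P g = (\<lambda>c. lim_val r P (\<lambda>\<xi>. g \<xi> c))"
  unfolding next_lab_def by (simp only: assms if_False)

lemma next_lab_relabelled:
  assumes wo: "Well_order r" and P: "P \<subseteq> Field r"
    and start: "relabelled f F0 G0"
    and stages: "\<forall>\<xi>\<in>P. relabelled f (g1 \<xi>) (g2 \<xi>)"
  shows "relabelled f (next_lab r \<sigma> F0 P g1) (next_lab r \<sigma> G0 P g2)"
proof (cases "P = {}")
  case True
  then show ?thesis
    using start by (simp add: next_lab_def)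
next
  case nonempty: False
  show ?thesis
  proof (cases "\<exists>\<xi>\<in>P. \<forall>\<zeta>\<in>P. (\<zeta>, \<xi>) \<in> r")
    case True
    define m where "m = (THE \<xi>. \<xi> \<in> P \<and> (\<forall>\<zeta>\<in>P. (\<zeta>, \<xi>) \<in> r))"
    have "\<exists>!\<xi>. \<xi> \<in> P \<and> (\<forall>\<zeta>\<in>P. (\<zeta>, \<xi>) \<in> r)"
    proof (rule ex_ex1I)
      fix x y
      assume "x \<in> P \<and> (\<forall>\<zeta>\<in>P. (\<zeta>, x) \<in> r)" and "y \<in> P \<and> (\<forall>\<zeta>\<in>P. (\<zeta>, y) \<in> r)"
      then show "x = y"
        using antisymD[OF wo_rel.ANTISYM[unfolded wo_rel_def, OF wo]] by blast
    qed (use True in blast)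
    then have "m \<in> P"
      unfolding m_def by (rule theI'[THEN conjunct1])
    then have "relabelled f (twist_act (\<sigma> m) (g1 m)) (twist_act (\<sigma> m) (g2 m))"
      using stages relabelled_twist_act by blast
    then show ?thesis
      by (simp only: next_lab_maximum[OF nonempty True, folded m_def])
  next
    case False
    have "lim_val r P (\<lambda>\<xi>. g2 \<xi> c) = f d" if lim: "lim_val r P (\<lambda>\<xi>. g1 \<xi> c) = Some d" for c d
    proof -
      obtain \<xi>0 where "\<xi>0 \<in> P" and "\<forall>\<xi>\<in>P. (\<xi>0, \<xi>) \<in> r \<longrightarrow> g1 \<xi> c = Some d"
        using lim_val_SomeD[OF wo P lim] by blast
      then have "\<forall>\<xi>\<in>P. (\<xi>0, \<xi>) \<in> r \<longrightarrow> g2 \<xi> c = f d"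
        using stages unfolding relabelled_def by blast
      then show ?thesis
        using \<open>\<xi>0 \<in> P\<close> by (intro lim_val_eqI[OF wo P]) blast
    qed
    then show ?thesis
      unfolding next_lab_limit[OF nonempty False] relabelled_def by blast
  qed
qed

lemma stage_relabelled:
  assumes wo: "Well_order r" and "relabelled f F0 G0"
  shows "relabelled f (stage r \<sigma> F0 \<eta>) (stage r \<sigma> G0 \<eta>)"
proof -
  have wf: "wf (r - Id)"
    by (rule wo_rel.WF[unfolded wo_rel_def, OF wo])
  show ?thesis
  proof (induction \<eta> rule: wf_induct[OF wf])
    case (1 \<eta>)
    let ?P = "{\<xi>. (\<xi>, \<eta>) \<in> r - Id}"
    have stage_unfold: "stage r \<sigma> H \<eta> = next_lab r \<sigma> H ?P (cut (stage r \<sigma> H) (r - Id) \<eta>)" for H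
      unfolding stage_def by (rule wfrec[OF wf])
    have "?P \<subseteq> Field r"
      by (auto simp: Field_def)
    moreover have "\<forall>\<xi>\<in>?P.
        relabelled f (cut (stage r \<sigma> F0) (r - Id) \<eta> \<xi>) (cut (stage r \<sigma> G0) (r - Id) \<eta> \<xi>)"
      using 1 by (simp add: cut_apply)
    ultimately show ?case
      unfolding stage_unfold[of F0] stage_unfold[of G0]
      using next_lab_relabelled[OF wo _ assms(2)] by blast
  qed
qed

lemma run_relabelled:
  assumes "Well_order r" and "relabelled f F0 G0"
  shows "relabelled f (run r \<sigma> F0) (run r \<sigma> G0)"
  unfolding run_def
  using assms stage_relabelled[OF assms] by (intro next_lab_relabelled) auto

corollary run_id_lab_relabelled:
  "Well_order r \<Longrightarrow> relabelled f (run r \<sigma> id_lab) (run r \<sigma> f)"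
  using run_relabelled relabelled_id_lab by blast

lemma run_lab_eq_if_run_id_lab_eq:
  assumes "Well_order r" and "Well_order s" and "legal Q (run r \<sigma> id_lab)"
    and "lab_eq Q (run r \<sigma> id_lab) (run s \<tau> id_lab)"
  shows "lab_eq Q (run r \<sigma> f) (run s \<tau> f)"
  unfolding lab_eq_def
proof
  fix c assume "c \<in> Q"
  then obtain d where run_r: "run r \<sigma> id_lab c = Some d" and run_s: "run s \<tau> id_lab c = Some d"
    using assms(3,4) unfolding legal_def lab_eq_def by fastforce
  show "run r \<sigma> f c = run s \<tau> f c"
    using relabelledD[OF run_id_lab_relabelled[OF assms(1), where f = f] run_r]
      relabelledD[OF run_id_lab_relabelled[OF assms(2), where f = f] run_s] by simp
qed

lemma run_id_lab_eq_if_seq_equiv: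
  assumes "Well_order r" and "Well_order s"
    and "legal Q (run r \<sigma> id_lab)" and "legal Q (run s \<tau> id_lab)"
    and equiv: "seq_equiv Q r \<sigma> s \<tau>"
  shows "lab_eq Q (run r \<sigma> id_lab) (run s \<tau> id_lab)"
  unfolding lab_eq_def
proof
  fix c assume "c \<in> Q"
  then obtain d d' where d: "run r \<sigma> id_lab c = Some d" and d': "run s \<tau> id_lab c = Some d'"
    using assms(3,4) unfolding legal_def by blast
  define f :: "'c \<Rightarrow> color option" where "f x = Some (if x = d then Red else White)" for x
  have "f d = f d'"
    using relabelledD[OF run_id_lab_relabelled[OF assms(1)] d, of f]
      relabelledD[OF run_id_lab_relabelled[OF assms(2)] d', of f]
      equiv \<open>c \<in> Q\<close> unfolding seq_equiv_def lab_eq_def by metis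
  then have "d = d'"
    unfolding f_def by (metis color.distinct(1) option.inject)
  then show "run r \<sigma> id_lab c = run s \<tau> id_lab c"
    using d d' by simp
qed

theorem seq_equiv_iff_run_id_lab_eq:
  fixes \<sigma> :: "'a \<Rightarrow> 'c \<Rightarrow> 'c" and \<tau> :: "'b \<Rightarrow> 'c \<Rightarrow> 'c"
  assumes "basic_seq B r \<sigma> \<and> basic_seq B s \<tau> \<and> univ_conv Q r \<sigma> \<and> univ_conv Q s \<tau>"
  shows "(seq_equiv Q r \<sigma> s \<tau> \<longleftrightarrow> lab_eq Q (run r \<sigma> id_lab) (run s \<tau> id_lab)) \<and>
      (seq_equiv Q r \<sigma> s \<tau> \<or> lab_eq Q (run r \<sigma> id_lab) (run s \<tau> id_lab) \<longrightarrow>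
        (\<forall>f :: 'c \<Rightarrow> 'z option. lab_eq Q (run r \<sigma> f) (run s \<tau> f)))"
proof -
  have wo: "Well_order r" "Well_order s"
    and legal: "legal Q (run r \<sigma> id_lab)" "legal Q (run s \<tau> id_lab)"
    using assms by (auto simp: basic_seq_def univ_conv_def)
  have id_lab_eq_imp: "lab_eq Q (run r \<sigma> id_lab) (run s \<tau> id_lab) \<Longrightarrow> lab_eq Q (run r \<sigma> f) (run s \<tau> f)"
    for f :: "'c \<Rightarrow> 'w option"
    by (rule run_lab_eq_if_run_id_lab_eq[OF wo legal(1)])
  then have "lab_eq Q (run r \<sigma> id_lab) (run s \<tau> id_lab) \<Longrightarrow> seq_equiv Q r \<sigma> s \<tau>"
    unfolding seq_equiv_def by blast
  then show ?thesis
    using id_lab_eq_imp run_id_lab_eq_if_seq_equiv[OF wo legal] by blast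
qed

theorem lemma3p5:
  fixes r :: "'a rel" and s :: "'b rel"
  assumes "infinite (UNIV :: 'l set)"
  shows
   "(\<forall>(\<sigma> :: 'a \<Rightarrow> 'l point \<Rightarrow> 'l point) (\<tau> :: 'b \<Rightarrow> 'l point \<Rightarrow> 'l point).
      basic_seq edgeless_basic r \<sigma> \<and> basic_seq edgeless_basic s \<tau> \<and>
      univ_conv edgeless_cube r \<sigma> \<and> univ_conv edgeless_cube s \<tau> \<longrightarrow>
        (seq_equiv edgeless_cube r \<sigma> s \<tau> \<longleftrightarrow>
           lab_eq edgeless_cube (run r \<sigma> id_lab) (run s \<tau> id_lab)) \<and>
        (seq_equiv edgeless_cube r \<sigma> s \<tau> \<or>
           lab_eq edgeless_cube (run r \<sigma> id_lab) (run s \<tau> id_lab) \<longrightarrow>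
           (\<forall>f :: 'l point \<Rightarrow> 'x option. lab_eq edgeless_cube (run r \<sigma> f) (run s \<tau> f))))
    \<and>
    (\<forall>(\<sigma> :: 'a \<Rightarrow> 'l point \<times> axis \<Rightarrow> 'l point \<times> axis)
      (\<tau> :: 'b \<Rightarrow> 'l point \<times> axis \<Rightarrow> 'l point \<times> axis).
      basic_seq edged_basic r \<sigma> \<and> basic_seq edged_basic s \<tau> \<and>
      univ_conv edged_cube r \<sigma> \<and> univ_conv edged_cube s \<tau> \<longrightarrow>
        (seq_equiv edged_cube r \<sigma> s \<tau> \<longleftrightarrow>
           lab_eq edged_cube (run r \<sigma> id_lab) (run s \<tau> id_lab)) \<and>
        (seq_equiv edged_cube r \<sigma> s \<tau> \<or>
           lab_eq edged_cube (run r \<sigma> id_lab) (run s \<tau> id_lab) \<longrightarrow>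
           (\<forall>f :: 'l point \<times> axis \<Rightarrow> 'y option. lab_eq edged_cube (run r \<sigma> f) (run s \<tau> f))))"
  by (intro conjI allI; rule impI; erule seq_equiv_iff_run_id_lab_eq)

end
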